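(* Let $p,n\ge1$, let $\Sigma$ be a real $p\times p$ symmetric positive definite matrix, let $x_1,\dots,x_n$ be i.i.d. $N(0,\Sigma)$ random vectors in $\mathbb{R}^p$, and let $\widehat S=\frac1n\sum_{i=1}^n x_ix_i^T$. Then for each $i\in\{1,\dots,n\}$, almost surely, $$E\left\{\|x_i\|_2^4\,\middle|\,\widehat S\right\}=\frac{n}{n+2}\left[2\,\mathrm{Tr}(\widehat S^2)+\mathrm{Tr}^2(\widehat S)\right].$$
   Context: $\|\cdot\|_2$ is the Euclidean norm, $\mathrm{Tr}$ the trace, and $\mathrm{Tr}^2(A)=(\mathrm{Tr}(A))^2$. *)

theory Defs
  imports "HOL-Probability.Probability"
begin

definition mvn_density :: "real^'p^'p \<Rightarrow> real^'p \<Rightarrow> real" where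
  "mvn_density Sig x =
     exp (- (x \<bullet> (matrix_inv Sig *v x)) / 2)
     / (sqrt ((2 * pi) ^ CARD('p) * det Sig))"

definition sym_pos_def_matrix :: "real^'p^'p \<Rightarrow> bool" where
  "sym_pos_def_matrix A \<longleftrightarrow> transpose A = A \<and> (\<forall>x. x \<noteq> 0 \<longrightarrow> x \<bullet> (A *v x) > 0)"

definition outer :: "real^'p \<Rightarrow> real^'p^'p" where
  "outer x = (\<chi> a b. x $ a * x $ b)"

definition sample_cov :: "nat \<Rightarrow> (nat \<Rightarrow> 'a \<Rightarrow> real^'p) \<Rightarrow> 'a \<Rightarrow> real^'p^'p" where
  "sample_cov n X \<omega> = (1 / real n) *\<^sub>R (\<Sum>i\<in>{1..n}. outer (X i \<omega>))"

end

theory Submission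
  imports Defs
begin

text \<open>
  We show
  E[|x_i|^4 | S] = n/(n+2) (2 tr(S^2) + tr(S)^2) by checking E[|x_i|^4; S in B] =
  E[h(S); S in B] for every Borel set B, where h is the right-hand side.

  The key symmetry is the rotation rot(u, v) = ((u+v)/sqrt 2, (v-u)/sqrt 2) of a pair of
  samples. It preserves Lebesgue measure on pairs (it is a product of three shears) and the
  product of two normal densities, hence the law of (x_a, x_b); independence of the remaining
  samples then makes it preserve the joint law of (x_a, x_b) and S, because
  x_a x_a^T + x_b x_b^T is rotation invariant. The same holds for swapping x_a and x_b.

  With J = E[|x_i|^4; S in B] and k(u, v) = 2 (u.v)^2 + |u|^2 |v|^2, swapping shows that J does
  not depend on i, and rotating shows E[k(x_a, x_b); S in B] = J for a <> b (when J is finite),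
  while k(u, u) = 3 |u|^4. Since n (n+2) h(S) = sum_{a,b} k(x_a, x_b), summing gives the claim.
\<close>

text \<open>Shearing one coordinate by a multiple of the other preserves Lebesgue measure on pairs,
  because every slice is merely translated.\<close>

lemma lborel_pair_shear_fst:
  fixes c :: real
  shows "distr (lborel \<Otimes>\<^sub>M lborel) (lborel \<Otimes>\<^sub>M lborel) (\<lambda>(u, v). (u + c *\<^sub>R v, v))
       = (lborel \<Otimes>\<^sub>M lborel :: ('a::euclidean_space \<times> 'a) measure)" (is "?D = ?L")
proof (rule measure_eqI)
  fix E assume "E \<in> sets ?D"
  then have E: "E \<in> sets ?L" by simp
  have shear: "(\<lambda>(u, v). (u + c *\<^sub>R v, v)) \<in> measurable ?L ?L"
    by measurable
  have "emeasure ?D E = emeasure ?L ((\<lambda>(u, v). (u + c *\<^sub>R v, v)) -` E \<inter> space ?L)"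
    using shear E by (simp add: emeasure_distr)
  also have "\<dots> = (\<integral>\<^sup>+y. emeasure lborel ((\<lambda>x. (x, y)) -`
                      ((\<lambda>(u, v). (u + c *\<^sub>R v, v)) -` E \<inter> space ?L)) \<partial>lborel)"
    using measurable_sets[OF shear E] by (rule lborel_pair.emeasure_pair_measure_alt2)
  also have "\<dots> = (\<integral>\<^sup>+y. emeasure lborel ((\<lambda>x. (x, y)) -` E) \<partial>lborel)"
  proof (rule nn_integral_cong)
    fix y :: 'a
    have slice: "(\<lambda>x. (x, y)) -` E \<in> sets lborel"
      using E by (rule sets_Pair2)
    have "(\<lambda>x. (x, y)) -` ((\<lambda>(u, v). (u + c *\<^sub>R v, v)) -` E \<inter> space ?L)
        = ((+) (c *\<^sub>R y)) -` ((\<lambda>x. (x, y)) -` E) \<inter> space lborel"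
      by (auto simp: space_pair_measure add.commute)
    also have "emeasure lborel \<dots> = emeasure (distr lborel borel ((+) (c *\<^sub>R y))) ((\<lambda>x. (x, y)) -` E)"
      using slice by (subst emeasure_distr) auto
    also have "\<dots> = emeasure lborel ((\<lambda>x. (x, y)) -` E)"
      by (simp add: lborel_distr_plus)
    finally show "emeasure lborel ((\<lambda>x. (x, y)) -` ((\<lambda>(u, v). (u + c *\<^sub>R v, v)) -` E \<inter> space ?L))
                = emeasure lborel ((\<lambda>x. (x, y)) -` E)" .
  qed
  also have "\<dots> = emeasure ?L E"
    using E by (rule lborel_pair.emeasure_pair_measure_alt2[symmetric])
  finally show "emeasure ?D E = emeasure ?L E" .
qed simp

lemma lborel_pair_swap:
  "distr (lborel \<Otimes>\<^sub>M lborel) (lborel \<Otimes>\<^sub>M lborel) (\<lambda>(u, v). (v, u))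
   = (lborel \<Otimes>\<^sub>M lborel :: ('a::euclidean_space \<times> 'a) measure)"
  by (rule lborel_pair.distr_pair_swap[symmetric])

text \<open>The shear in the other coordinate is conjugate to the first by the swap.\<close>

lemma lborel_pair_shear_snd:
  fixes c :: real
  shows "distr (lborel \<Otimes>\<^sub>M lborel) (lborel \<Otimes>\<^sub>M lborel) (\<lambda>(u, v). (u, v + c *\<^sub>R u))
       = (lborel \<Otimes>\<^sub>M lborel :: ('a::euclidean_space \<times> 'a) measure)"
proof -
  let ?L = "lborel \<Otimes>\<^sub>M lborel :: ('a \<times> 'a) measure"
  let ?swap = "\<lambda>(u, v). (v, u) :: 'a \<times> 'a"
  let ?shear = "\<lambda>(u, v). (u + c *\<^sub>R v, v) :: 'a \<times> 'a"
  have swap: "?swap \<in> measurable ?L ?L" by measurable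
  have shear: "?shear \<in> measurable ?L ?L" by measurable
  have "distr (distr (distr ?L ?L ?swap) ?L ?shear) ?L ?swap = distr ?L ?L (?swap \<circ> (?shear \<circ> ?swap))"
    by (simp only: distr_distr[OF shear swap] distr_distr[OF swap measurable_comp[OF swap shear]])
  also have "?swap \<circ> (?shear \<circ> ?swap) = (\<lambda>(u, v). (u, v + c *\<^sub>R u))"
    by (auto simp: fun_eq_iff)
  finally have "distr ?L ?L (\<lambda>(u, v). (u, v + c *\<^sub>R u)) = distr (distr (distr ?L ?L ?swap) ?L ?shear) ?L ?swap"
    by simp
  then show ?thesis
    by (simp only: lborel_pair_swap lborel_pair_shear_fst)
qed

definition rot :: "'a::real_vector \<times> 'a \<Rightarrow> 'a \<times> 'a" where
  "rot = (\<lambda>(u, v). ((sqrt 2 / 2) *\<^sub>R (u + v), (sqrt 2 / 2) *\<^sub>R (v - u)))"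

lemma rot_eq_shears:
  "rot = (\<lambda>(u, v). (u + (sqrt 2 - 1) *\<^sub>R v, v)) \<circ> (\<lambda>(u, v). (u, v + (- (sqrt 2 / 2)) *\<^sub>R u))
          \<circ> (\<lambda>(u, v). (u + (sqrt 2 - 1) *\<^sub>R v, v))"
proof -
  let ?a = "sqrt 2 - 1" and ?b = "- (sqrt 2 / 2)" and ?s = "sqrt 2 / 2"
  have diag: "1 + ?a * ?b = ?s"
    by (simp add: algebra_simps) (simp add: field_simps)
  have offdiag: "?a + ?a + ?a * ?a * ?b = ?s"
    by (simp add: algebra_simps)
  have compose_fst: "u + a *\<^sub>R v + a *\<^sub>R (v + b *\<^sub>R (u + a *\<^sub>R v))
                   = (1 + a * b) *\<^sub>R u + (a + a + a * a * b) *\<^sub>R v" for a b :: real and u v :: 'a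
    by (simp add: algebra_simps) (metis mult_2_right scaleR_left_distrib)
  have compose_snd: "v + b *\<^sub>R (u + a *\<^sub>R v) = b *\<^sub>R u + (1 + a * b) *\<^sub>R v" for a b :: real and u v :: 'a
    by (simp add: algebra_simps)
  have pointwise: "rot (u, v) = ((\<lambda>(u, v). (u + ?a *\<^sub>R v, v)) \<circ> (\<lambda>(u, v). (u, v + ?b *\<^sub>R u))
                               \<circ> (\<lambda>(u, v). (u + ?a *\<^sub>R v, v))) (u, v)" for u v :: 'a
  proof -
    have fst_eq: "u + ?a *\<^sub>R v + ?a *\<^sub>R (v + ?b *\<^sub>R (u + ?a *\<^sub>R v)) = ?s *\<^sub>R (u + v)"
      unfolding compose_fst by (simp only: diag offdiag scaleR_add_right)
    have snd_eq: "v + ?b *\<^sub>R (u + ?a *\<^sub>R v) = ?s *\<^sub>R (v - u)"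
      unfolding compose_snd by (simp only: diag) (simp add: algebra_simps)
    show ?thesis using fst_eq snd_eq by (simp add: rot_def)
  qed
  show ?thesis
  proof (rule ext)
    fix p :: "'a \<times> 'a"
    show "rot p = ((\<lambda>(u, v). (u + ?a *\<^sub>R v, v)) \<circ> (\<lambda>(u, v). (u, v + ?b *\<^sub>R u))
                   \<circ> (\<lambda>(u, v). (u + ?a *\<^sub>R v, v))) p"
      using pointwise by (cases p) (simp only:)
  qed
qed

lemma rot_measurable[measurable]:
  "rot \<in> measurable (borel \<Otimes>\<^sub>M borel) (borel \<Otimes>\<^sub>M (borel :: ('a::euclidean_space) measure))"
  unfolding rot_def by measurable

lemma lborel_pair_rot:
  "distr (lborel \<Otimes>\<^sub>M lborel) (lborel \<Otimes>\<^sub>M lborel) rot = (lborel \<Otimes>\<^sub>M lborel :: ('a::euclidean_space \<times> 'a) measure)"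
proof -
  let ?L = "lborel \<Otimes>\<^sub>M lborel :: ('a \<times> 'a) measure"
  let ?U = "(\<lambda>(u, v). (u + (sqrt 2 - 1) *\<^sub>R v, v)) :: 'a \<times> 'a \<Rightarrow> _"
  let ?V = "(\<lambda>(u, v). (u, v + (- (sqrt 2 / 2)) *\<^sub>R u)) :: 'a \<times> 'a \<Rightarrow> _"
  have U: "?U \<in> measurable ?L ?L" by measurable
  have V: "?V \<in> measurable ?L ?L" by measurable
  have "distr ?L ?L rot = distr (distr (distr ?L ?L ?U) ?L ?V) ?L ?U"
    by (simp only: rot_eq_shears distr_distr[OF V U] distr_distr[OF U measurable_comp[OF U V]] comp_assoc)
  also have "\<dots> = ?L"
    by (simp only: lborel_pair_shear_fst lborel_pair_shear_snd)
  finally show ?thesis .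
qed

lemma product_density_rot_invariant:
  fixes \<phi> :: "'a::euclidean_space \<Rightarrow> ennreal"
  assumes [measurable]: "\<phi> \<in> borel_measurable borel"
    and sigma_finite: "sigma_finite_measure (density lborel \<phi>)"
    and invariant: "\<And>p. \<phi> (fst (rot p)) * \<phi> (snd (rot p)) = \<phi> (fst p) * \<phi> (snd p)"
  shows "distr (density lborel \<phi> \<Otimes>\<^sub>M density lborel \<phi>) (borel \<Otimes>\<^sub>M borel) rot
       = density lborel \<phi> \<Otimes>\<^sub>M density lborel \<phi>"
proof -
  let ?L = "lborel \<Otimes>\<^sub>M lborel :: ('a \<times> 'a) measure"
  define \<psi> where "\<psi> = (\<lambda>p::'a \<times> 'a. \<phi> (fst p) * \<phi> (snd p))"
  have [measurable]: "\<psi> \<in> borel_measurable ?L" unfolding \<psi>_def by measurable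
  have \<psi>_rot: "\<psi> (rot p) = \<psi> p" for p unfolding \<psi>_def by (rule invariant)
  have product: "density lborel \<phi> \<Otimes>\<^sub>M density lborel \<phi> = density ?L \<psi>"
    unfolding \<psi>_def
    by (subst pair_measure_density) (auto simp: case_prod_beta' intro: sigma_finite lborel.sigma_finite_measure_axioms)
  have rot_L: "rot \<in> measurable ?L ?L" unfolding rot_def by measurable
  have sets_L: "sets ?L = sets (borel \<Otimes>\<^sub>M borel)" by (rule sets_pair_measure_cong) simp_all
  show ?thesis unfolding product
  proof (rule measure_eqI)
    fix E assume "E \<in> sets (distr (density ?L \<psi>) (borel \<Otimes>\<^sub>M borel) rot)"
    then have E[measurable]: "E \<in> sets ?L" by (simp add: sets_L)
    have "emeasure (distr (density ?L \<psi>) (borel \<Otimes>\<^sub>M borel) rot) E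
        = emeasure (density ?L \<psi>) (rot -` E \<inter> space ?L)"
      using rot_L E by (subst emeasure_distr) (auto simp: sets_L measurable_cong_sets[OF _ sets_L])
    also have "\<dots> = (\<integral>\<^sup>+p. \<psi> p * indicator (rot -` E \<inter> space ?L) p \<partial>?L)"
      using measurable_sets[OF rot_L E] by (subst emeasure_density) (auto simp: mult.commute)
    also have "\<dots> = (\<integral>\<^sup>+p. \<psi> (rot p) * indicator E (rot p) \<partial>?L)"
      by (intro nn_integral_cong) (auto simp: \<psi>_rot space_pair_measure split: split_indicator)
    also have "\<dots> = (\<integral>\<^sup>+p. \<psi> p * indicator E p \<partial>(distr ?L ?L rot))"
      using rot_L by (subst nn_integral_distr) auto
    also have "\<dots> = emeasure (density ?L \<psi>) E"
      using E by (simp add: lborel_pair_rot emeasure_density mult.commute)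
    finally show "emeasure (distr (density ?L \<psi>) (borel \<Otimes>\<^sub>M borel) rot) E = emeasure (density ?L \<psi>) E" .
  qed (simp add: sets_L)
qed

lemma quadratic_form_rot:
  fixes A :: "real^'p^'p"
  shows "fst (rot (u, v)) \<bullet> (A *v fst (rot (u, v))) + snd (rot (u, v)) \<bullet> (A *v snd (rot (u, v)))
       = u \<bullet> (A *v u) + v \<bullet> (A *v v)"
proof -
  have half: "(sqrt 2 / 2) * (sqrt 2 / 2) = (1 / 2 :: real)" by (simp add: field_simps)
  have "fst (rot (u, v)) \<bullet> (A *v fst (rot (u, v))) + snd (rot (u, v)) \<bullet> (A *v snd (rot (u, v)))
     = ((sqrt 2 / 2) * (sqrt 2 / 2)) * ((u + v) \<bullet> (A *v (u + v)) + (v - u) \<bullet> (A *v (v - u)))"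
  proof -
    have "(s *\<^sub>R (u + v)) \<bullet> (A *v (s *\<^sub>R (u + v))) + (s *\<^sub>R (v - u)) \<bullet> (A *v (s *\<^sub>R (v - u)))
        = (s * s) * ((u + v) \<bullet> (A *v (u + v)) + (v - u) \<bullet> (A *v (v - u)))" for s :: real
      by (simp add: matrix_vector_mult_scaleR algebra_simps)
    then show ?thesis unfolding rot_def by (simp only: prod.case fst_conv snd_conv)
  qed
  also have "\<dots> = u \<bullet> (A *v u) + v \<bullet> (A *v v)"
    by (simp only: half) (simp add: matrix_vector_right_distrib matrix_vector_mult_diff_distrib
        inner_add_left inner_add_right inner_diff_left inner_diff_right algebra_simps)
  finally show ?thesis .
qed

text \<open>Hence so is the product of two normal densities; this holds for any matrix Sig, since the sign
  of the density is that of its (constant) normalisation.\<close>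

lemma mvn_density_rot:
  "ennreal (mvn_density Sig (fst (rot p))) * ennreal (mvn_density Sig (snd (rot p)))
   = ennreal (mvn_density Sig (fst p)) * ennreal (mvn_density Sig (snd p))"
proof -
  obtain u v where p: "p = (u, v)" by (cases p)
  have exp_sum: "exp (- a / 2) * exp (- b / 2) = exp (- c / 2) * exp (- d / 2)"
    if "a + b = c + d" for a b c d :: real
    using that by (simp add: exp_add[symmetric] field_simps)
  have real_eq: "mvn_density Sig (fst (rot p)) * mvn_density Sig (snd (rot p))
               = mvn_density Sig (fst p) * mvn_density Sig (snd p)"
    unfolding p mvn_density_def using exp_sum[OF quadratic_form_rot[where A = "matrix_inv Sig"]] by simp
  consider "\<And>x. mvn_density Sig x \<ge> 0" | "\<And>x. mvn_density Sig x \<le> 0"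
  proof (cases "sqrt ((2 * pi) ^ CARD('a) * det Sig) \<ge> 0")
    case True
    then have "mvn_density Sig x \<ge> 0" for x
      by (simp add: mvn_density_def)
    then show ?thesis by (rule that(1))
  next
    case False
    have "mvn_density Sig x \<le> 0" for x
      using False unfolding mvn_density_def by (rule_tac divide_nonneg_neg) simp_all
    then show ?thesis by (rule that(2))
  qed
  then show ?thesis
  proof cases
    case 1
    then show ?thesis using real_eq by (simp add: ennreal_mult[symmetric])
  next
    case 2
    then show ?thesis by (simp add: ennreal_neg)
  qed
qed

lemma outer_measurable[measurable]: "outer \<in> borel_measurable (borel :: (real^'p) measure)"
  unfolding outer_def by (intro borel_measurable_continuous_onI continuous_on_vec_lambda continuous_intros)

lemma trace_measurable[measurable]: "trace \<in> borel_measurable (borel :: (real^'p^'p) measure)"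
  unfolding trace_def by (intro borel_measurable_continuous_onI continuous_intros)

lemma matrix_square_measurable[measurable]: "(\<lambda>A::real^'p^'p. A ** A) \<in> borel_measurable borel"
  unfolding matrix_matrix_mult_def
  by (intro borel_measurable_continuous_onI continuous_on_vec_lambda continuous_intros)

lemma trace_scaled_outer:
  fixes f :: "'i \<Rightarrow> real^'p"
  shows "trace (c *\<^sub>R (\<Sum>j\<in>J. outer (f j))) = c * (\<Sum>j\<in>J. f j \<bullet> f j)"
  by (simp add: trace_def outer_def sum_component inner_vec_def sum_distrib_left) (rule sum.swap)

lemma trace_square_scaled_outer:
  fixes f :: "'i \<Rightarrow> real^'p"
  shows "trace ((c *\<^sub>R (\<Sum>j\<in>J. outer (f j))) ** (c *\<^sub>R (\<Sum>j\<in>J. outer (f j))))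
       = c^2 * (\<Sum>a\<in>J. \<Sum>b\<in>J. (f a \<bullet> f b)^2)"
proof -
  have "trace ((c *\<^sub>R (\<Sum>j\<in>J. outer (f j))) ** (c *\<^sub>R (\<Sum>j\<in>J. outer (f j))))
      = (\<Sum>k\<in>UNIV. \<Sum>l\<in>UNIV. (c * (\<Sum>a\<in>J. f a $ k * f a $ l)) * (c * (\<Sum>b\<in>J. f b $ l * f b $ k)))"
    by (simp add: trace_def matrix_matrix_mult_def outer_def sum_component)
  also have "\<dots> = c^2 * (\<Sum>k\<in>UNIV. \<Sum>l\<in>UNIV. \<Sum>a\<in>J. \<Sum>b\<in>J. (f a $ k * f b $ k) * (f a $ l * f b $ l))"
    by (simp add: sum_product sum_distrib_left power2_eq_square algebra_simps)
  also have "\<dots> = c^2 * (\<Sum>a\<in>J. \<Sum>b\<in>J. \<Sum>k\<in>UNIV. \<Sum>l\<in>UNIV. (f a $ k * f b $ k) * (f a $ l * f b $ l))"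
    by (subst sum.swap, subst (2) sum.swap, subst (3) sum.swap, simp add: sum.swap[of _ UNIV J])
  also have "\<dots> = c^2 * (\<Sum>a\<in>J. \<Sum>b\<in>J. (f a \<bullet> f b)^2)"
    by (simp add: inner_vec_def power2_eq_square sum_product)
  finally show ?thesis .
qed

definition fourth_moment_statistic :: "nat \<Rightarrow> real^'p^'p \<Rightarrow> real" where
  "fourth_moment_statistic n A = real n / (real n + 2) * (2 * trace (A ** A) + (trace A)^2)"

lemma fourth_moment_statistic_measurable[measurable]:
  "fourth_moment_statistic n \<in> borel_measurable borel"
  unfolding fourth_moment_statistic_def by measurable

text \<open>The kernel k(u, v) = 2 (u.v)^2 + |u|^2 |v|^2 whose double sum over the sample is
  n (n+2) times the statistic.\<close>

definition pair_kernel :: "'a::real_inner \<Rightarrow> 'a \<Rightarrow> real" where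
  "pair_kernel u v = 2 * (u \<bullet> v)^2 + (u \<bullet> u) * (v \<bullet> v)"

lemma measurable_pair_kernel[measurable]:
  fixes f g :: "'a \<Rightarrow> 'b::euclidean_space"
  assumes [measurable]: "f \<in> borel_measurable M" "g \<in> borel_measurable M"
  shows "(\<lambda>x. pair_kernel (f x) (g x)) \<in> borel_measurable M"
  unfolding pair_kernel_def by measurable

lemma pair_kernel_nonneg: "pair_kernel u v \<ge> 0"
  by (simp add: pair_kernel_def)

lemma norm_pow_4: "norm x ^ 4 = (x \<bullet> x)^2"
  by (simp flip: power2_norm_eq_inner power_mult)

lemma pair_kernel_diag: "pair_kernel u u = 3 * norm u ^ 4"
  by (simp add: pair_kernel_def norm_pow_4 power2_eq_square)

lemma fourth_moment_statistic_sum: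
  fixes f :: "nat \<Rightarrow> real^'p"
  assumes "n \<ge> 1"
  shows "real n * (real n + 2) * fourth_moment_statistic n ((1 / real n) *\<^sub>R (\<Sum>j\<in>{1..n}. outer (f j)))
       = (\<Sum>a\<in>{1..n}. \<Sum>b\<in>{1..n}. pair_kernel (f a) (f b))"
proof -
  define S1 where "S1 = (\<Sum>a\<in>{1..n}. f a \<bullet> f a)"
  define S2 where "S2 = (\<Sum>a\<in>{1..n}. \<Sum>b\<in>{1..n}. (f a \<bullet> f b)^2)"
  have "S1^2 = (\<Sum>a\<in>{1..n}. \<Sum>b\<in>{1..n}. (f a \<bullet> f a) * (f b \<bullet> f b))"
    by (simp add: S1_def power2_eq_square sum_product)
  then have "(\<Sum>a\<in>{1..n}. \<Sum>b\<in>{1..n}. pair_kernel (f a) (f b)) = 2 * S2 + S1^2"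
    by (simp add: pair_kernel_def S2_def sum.distrib sum_distrib_left)
  moreover have "fourth_moment_statistic n ((1 / real n) *\<^sub>R (\<Sum>j\<in>{1..n}. outer (f j)))
      = real n / (real n + 2) * (2 * ((1 / real n)^2 * S2) + ((1 / real n) * S1)^2)"
    unfolding fourth_moment_statistic_def trace_square_scaled_outer trace_scaled_outer S1_def S2_def ..
  moreover have "real n * (real n + 2) * (real n / (real n + 2) * (2 * ((1 / real n)^2 * S2) + ((1 / real n) * S1)^2))
      = 2 * S2 + S1^2"
  proof -
    have n: "real n \<noteq> 0" "real n + 2 \<noteq> 0" using assms by auto
    then have "real n * (real n + 2) * (real n / (real n + 2)) = real n * real n" by simp
    moreover have "real n * real n * (2 * ((1 / real n)^2 * S2) + ((1 / real n) * S1)^2) = 2 * S2 + S1^2"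
      using n by (simp add: power2_eq_square field_simps)
    ultimately show ?thesis by (metis mult.assoc)
  qed
  ultimately show ?thesis by simp
qed

lemma fourth_moment_statistic_nonneg:
  fixes f :: "nat \<Rightarrow> real^'p"
  assumes "n \<ge> 1"
  shows "fourth_moment_statistic n ((1 / real n) *\<^sub>R (\<Sum>j\<in>{1..n}. outer (f j))) \<ge> 0"
proof -
  have "real n * (real n + 2) * fourth_moment_statistic n ((1 / real n) *\<^sub>R (\<Sum>j\<in>{1..n}. outer (f j))) \<ge> 0"
    unfolding fourth_moment_statistic_sum[OF assms] by (intro sum_nonneg pair_kernel_nonneg)
  moreover have "real n * (real n + 2) > 0" using assms by simp
  ultimately show ?thesis by (simp add: zero_le_mult_iff)
qed

lemma rot_norm_pow_4:
  fixes u v :: "'a::real_inner"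
  shows "norm (fst (rot (u, v))) ^ 4 + norm (snd (rot (u, v))) ^ 4
       = pair_kernel u v + (norm u ^ 4 + norm v ^ 4) / 2"
proof -
  have half: "(sqrt 2 / 2) * (sqrt 2 / 2) = (1 / 2 :: real)" by (simp add: field_simps)
  have fst_sq: "fst (rot (u, v)) \<bullet> fst (rot (u, v)) = (u \<bullet> u + 2 * (u \<bullet> v) + v \<bullet> v) / 2"
  proof -
    have "fst (rot (u, v)) \<bullet> fst (rot (u, v)) = ((sqrt 2 / 2) * (sqrt 2 / 2)) * ((u + v) \<bullet> (u + v))"
      by (simp add: rot_def)
    also have "\<dots> = (u \<bullet> u + 2 * (u \<bullet> v) + v \<bullet> v) / 2"
      by (simp only: half) (simp add: inner_add_left inner_add_right inner_commute[of v u])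
    finally show ?thesis .
  qed
  have snd_sq: "snd (rot (u, v)) \<bullet> snd (rot (u, v)) = (u \<bullet> u - 2 * (u \<bullet> v) + v \<bullet> v) / 2"
  proof -
    have "snd (rot (u, v)) \<bullet> snd (rot (u, v)) = ((sqrt 2 / 2) * (sqrt 2 / 2)) * ((v - u) \<bullet> (v - u))"
      by (simp add: rot_def)
    also have "\<dots> = (u \<bullet> u - 2 * (u \<bullet> v) + v \<bullet> v) / 2"
      by (simp only: half) (simp add: inner_diff_left inner_diff_right inner_commute[of v u])
    finally show ?thesis .
  qed
  show ?thesis
    unfolding norm_pow_4 pair_kernel_def fst_sq snd_sq by (simp add: power2_eq_square field_simps)
qed

lemma rot_outer: "outer (fst (rot p)) + outer (snd (rot p)) = outer (fst p) + outer (snd (p :: (real^'p) \<times> (real^'p)))"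
proof -
  obtain u v where p: "p = (u, v)" by (cases p)
  have half: "(sqrt 2 / 2) * (sqrt 2 / 2) = (1 / 2 :: real)" by (simp add: field_simps)
  have "s * a * (s * b) + s * c * (s * d) = (s * s) * (a * b + c * d)" for s a b c d :: real
    by (simp add: algebra_simps)
  then show ?thesis
    by (simp add: p outer_def rot_def vec_eq_iff half field_simps)
qed

lemma (in prob_space) indep_pair_rest_distr:
  fixes X :: "'i \<Rightarrow> 'a \<Rightarrow> 'b::euclidean_space"
  assumes indep: "indep_vars (\<lambda>_. borel) X I"
    and ab: "a \<in> I" "b \<in> I" "a \<noteq> b"
    and distr_a: "distr M borel (X a) = \<nu>" and distr_b: "distr M borel (X b) = \<nu>"
  defines "K \<equiv> I - {a, b}"
  shows "distr M ((borel \<Otimes>\<^sub>M borel) \<Otimes>\<^sub>M PiM K (\<lambda>_. borel))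
           (\<lambda>\<omega>. ((X a \<omega>, X b \<omega>), restrict (\<lambda>j. X j \<omega>) K))
       = (\<nu> \<Otimes>\<^sub>M \<nu>) \<Otimes>\<^sub>M distr M (PiM K (\<lambda>_. borel)) (\<lambda>\<omega>. restrict (\<lambda>j. X j \<omega>) K)"
proof -
  let ?P = "PiM {a, b} (\<lambda>_. borel)" and ?R = "PiM K (\<lambda>_. borel)"
  let ?pair = "\<lambda>\<omega>. restrict (\<lambda>j. X j \<omega>) {a, b}" and ?rest = "\<lambda>\<omega>. restrict (\<lambda>j. X j \<omega>) K"
  have indep_pair_rest: "indep_var ?P ?pair ?R ?rest"
    using ab unfolding K_def by (intro indep_var_restrict[OF indep]) auto
  have indep_ab: "indep_var borel (X a) borel (X b)"
  proof -
    have "indep_var (PiM {a} (\<lambda>_. borel)) (\<lambda>\<omega>. restrict (\<lambda>j. X j \<omega>) {a})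
                    (PiM {b} (\<lambda>_. borel)) (\<lambda>\<omega>. restrict (\<lambda>j. X j \<omega>) {b})"
      using ab by (intro indep_var_restrict[OF indep]) auto
    from indep_var_compose[OF this measurable_component_singleton[of a "{a}" "\<lambda>_. borel"]
        measurable_component_singleton[of b "{b}" "\<lambda>_. borel"]]
    show ?thesis unfolding comp_def by simp
  qed
  have distr_ab: "distr M (borel \<Otimes>\<^sub>M borel) (\<lambda>\<omega>. (X a \<omega>, X b \<omega>)) = \<nu> \<Otimes>\<^sub>M \<nu>"
    using indep_ab distr_a distr_b by (simp add: indep_var_distribution_eq)
  have select: "(\<lambda>f. (f a, f b)) \<in> measurable ?P (borel \<Otimes>\<^sub>M (borel :: 'b measure))"
    by (intro measurable_Pair measurable_component_singleton) auto
  have [measurable]: "random_variable ?P ?pair" "random_variable ?R ?rest"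
    using indep_pair_rest by (auto simp: indep_var_distribution_eq)
  have sigma_finite_rest: "sigma_finite_measure (distr (distr M ?R ?rest) ?R (\<lambda>r. r))"
    using prob_space_distr[of ?rest ?R] by (simp add: distr_id2 prob_space_imp_sigma_finite)
  have "distr M ((borel \<Otimes>\<^sub>M borel) \<Otimes>\<^sub>M ?R) (\<lambda>\<omega>. ((X a \<omega>, X b \<omega>), ?rest \<omega>))
      = distr (distr M (?P \<Otimes>\<^sub>M ?R) (\<lambda>\<omega>. (?pair \<omega>, ?rest \<omega>)))
          ((borel \<Otimes>\<^sub>M borel) \<Otimes>\<^sub>M ?R) (\<lambda>(f, g). ((f a, f b), g))"
    using select by (subst distr_distr) (auto simp: comp_def)
  also have "\<dots> = distr (distr M ?P ?pair \<Otimes>\<^sub>M distr M ?R ?rest)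
          ((borel \<Otimes>\<^sub>M borel) \<Otimes>\<^sub>M ?R) (\<lambda>(f, g). ((f a, f b), g))"
    using indep_pair_rest by (simp add: indep_var_distribution_eq)
  also have "\<dots> = distr (distr M ?P ?pair) (borel \<Otimes>\<^sub>M borel) (\<lambda>f. (f a, f b))
                    \<Otimes>\<^sub>M distr (distr M ?R ?rest) ?R (\<lambda>r. r)"
    by (rule pair_measure_distr[symmetric])
       (use select sigma_finite_rest in \<open>auto simp: measurable_ident_sets\<close>)
  also have "\<dots> = (\<nu> \<Otimes>\<^sub>M \<nu>) \<Otimes>\<^sub>M distr M ?R ?rest"
    using select distr_ab by (simp add: distr_distr distr_id2 comp_def)
  finally show ?thesis .
qed

lemma distr_pair_measure_fst:
  assumes T: "T \<in> measurable \<mu> N" and sets_\<rho>: "sets \<rho> = sets L" and "prob_space \<rho>"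
  shows "distr (\<mu> \<Otimes>\<^sub>M \<rho>) (N \<Otimes>\<^sub>M L) (\<lambda>(p, r). (T p, r)) = distr \<mu> N T \<Otimes>\<^sub>M \<rho>"
proof -
  have id: "(\<lambda>r. r) \<in> measurable \<rho> L"
    using sets_\<rho> by (rule measurable_ident_sets)
  have "sigma_finite_measure (distr \<rho> L (\<lambda>r. r))"
    using \<open>prob_space \<rho>\<close> by (simp add: distr_id2[OF sets_\<rho>[symmetric]] prob_space_imp_sigma_finite)
  from pair_measure_distr[OF T id this]
  show ?thesis by (simp add: distr_id2[OF sets_\<rho>[symmetric]])
qed

lemma (in prob_space) indep_pair_transform:
  fixes X :: "'i \<Rightarrow> 'a \<Rightarrow> 'b::euclidean_space"
  assumes indep: "indep_vars (\<lambda>_. borel) X I"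
    and ab: "a \<in> I" "b \<in> I" "a \<noteq> b"
    and distr_a: "distr M borel (X a) = \<nu>" and distr_b: "distr M borel (X b) = \<nu>"
    and T: "T \<in> measurable (borel \<Otimes>\<^sub>M borel) (borel \<Otimes>\<^sub>M borel)"
    and T_preserves: "distr (\<nu> \<Otimes>\<^sub>M \<nu>) (borel \<Otimes>\<^sub>M borel) T = \<nu> \<Otimes>\<^sub>M \<nu>"
    and [measurable]: "G \<in> borel_measurable ((borel \<Otimes>\<^sub>M borel) \<Otimes>\<^sub>M PiM (I - {a, b}) (\<lambda>_. borel))"
  shows "(\<integral>\<^sup>+\<omega>. G ((X a \<omega>, X b \<omega>), restrict (\<lambda>j. X j \<omega>) (I - {a, b})) \<partial>M)
       = (\<integral>\<^sup>+\<omega>. G (T (X a \<omega>, X b \<omega>), restrict (\<lambda>j. X j \<omega>) (I - {a, b})) \<partial>M)"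
proof -
  let ?K = "I - {a, b}"
  let ?S = "(borel \<Otimes>\<^sub>M borel) \<Otimes>\<^sub>M PiM ?K (\<lambda>_. borel)"
  let ?R = "distr M (PiM ?K (\<lambda>_. borel)) (\<lambda>\<omega>. restrict (\<lambda>j. X j \<omega>) ?K)"
  define Z where "Z = (\<lambda>\<omega>. ((X a \<omega>, X b \<omega>), restrict (\<lambda>j. X j \<omega>) ?K))"
  have [measurable]: "X j \<in> borel_measurable M" if "j \<in> I" for j
    using indep that unfolding indep_vars_def2 by blast
  have Z: "Z \<in> measurable M ?S"
    unfolding Z_def using ab by (intro measurable_Pair measurable_restrict) auto
  have joint: "distr M ?S Z = (\<nu> \<Otimes>\<^sub>M \<nu>) \<Otimes>\<^sub>M ?R"
    unfolding Z_def by (rule indep_pair_rest_distr[OF indep ab distr_a distr_b])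
  have "sets \<nu> = sets borel"
    using distr_a by (metis sets_distr)
  then have sets_\<nu>\<nu>: "sets (\<nu> \<Otimes>\<^sub>M \<nu>) = sets (borel \<Otimes>\<^sub>M (borel :: 'b measure))"
    by (rule sets_pair_measure_cong) fact
  have T_\<nu>: "T \<in> measurable (\<nu> \<Otimes>\<^sub>M \<nu>) (borel \<Otimes>\<^sub>M borel)"
    using T by (simp only: measurable_cong_sets[OF sets_\<nu>\<nu> refl])
  have "prob_space ?R"
    by (rule prob_space_distr) (use Z in \<open>simp add: Z_def\<close>)
  then have transform: "distr ((\<nu> \<Otimes>\<^sub>M \<nu>) \<Otimes>\<^sub>M ?R) ?S (\<lambda>(p, r). (T p, r)) = (\<nu> \<Otimes>\<^sub>M \<nu>) \<Otimes>\<^sub>M ?R"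
    using distr_pair_measure_fst[OF T_\<nu>, of ?R "PiM ?K (\<lambda>_. borel)"] T_preserves by simp
  have shift: "(\<lambda>(p, r). (T p, r)) \<in> measurable ((\<nu> \<Otimes>\<^sub>M \<nu>) \<Otimes>\<^sub>M ?R) ?S"
    using T_\<nu> by measurable
  have "(\<integral>\<^sup>+\<omega>. G (Z \<omega>) \<partial>M) = (\<integral>\<^sup>+z. G z \<partial>distr M ?S Z)"
    using Z by (simp add: nn_integral_distr)
  also have "\<dots> = (\<integral>\<^sup>+z. G z \<partial>distr ((\<nu> \<Otimes>\<^sub>M \<nu>) \<Otimes>\<^sub>M ?R) ?S (\<lambda>(p, r). (T p, r)))"
    by (simp only: joint transform)
  also have "\<dots> = (\<integral>\<^sup>+z. G (T (fst z), snd z) \<partial>((\<nu> \<Otimes>\<^sub>M \<nu>) \<Otimes>\<^sub>M ?R))"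
    using shift by (simp add: nn_integral_distr case_prod_beta')
  also have "\<dots> = (\<integral>\<^sup>+z. G (T (fst z), snd z) \<partial>distr M ?S Z)"
    by (simp only: joint)
  also have "\<dots> = (\<integral>\<^sup>+\<omega>. G (T (fst (Z \<omega>)), snd (Z \<omega>)) \<partial>M)"
    using Z T by (simp add: nn_integral_distr)
  finally show ?thesis by (simp add: Z_def)
qed

text \<open>An independent sample X_1, ..., X_n with common law nu such that nu x nu is rotation
  invariant. The normal sample is an instance.\<close>

locale rotation_invariant_sample = prob_space M
  for M :: "'a measure" and X :: "nat \<Rightarrow> 'a \<Rightarrow> real^'p" and n :: nat and \<nu> :: "(real^'p) measure" +
  assumes n_pos: "n \<ge> 1"
    and indep: "indep_vars (\<lambda>_. borel) X {1..n}"
    and distr_X: "\<And>j. j \<in> {1..n} \<Longrightarrow> distr M borel (X j) = \<nu>"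
    and rot_preserves: "distr (\<nu> \<Otimes>\<^sub>M \<nu>) (borel \<Otimes>\<^sub>M borel) rot = \<nu> \<Otimes>\<^sub>M \<nu>"
begin

lemma X_measurable: "j \<in> {1..n} \<Longrightarrow> X j \<in> borel_measurable M"
  using indep unfolding indep_vars_def2 by blast

lemma sample_cov_measurable[measurable]: "sample_cov n X \<in> borel_measurable M"
proof -
  have "(\<lambda>\<omega>. \<Sum>j\<in>{1..n}. outer (X j \<omega>)) \<in> borel_measurable M"
    by (rule borel_measurable_sum) (rule measurable_compose[OF X_measurable outer_measurable])
  then show ?thesis
    unfolding sample_cov_def[abs_def] by measurable
qed

lemma swap_preserves: "distr (\<nu> \<Otimes>\<^sub>M \<nu>) (borel \<Otimes>\<^sub>M borel) (\<lambda>(x, y). (y, x)) = \<nu> \<Otimes>\<^sub>M \<nu>"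
proof -
  have one: "1 \<in> {1..n}" using n_pos by simp
  have "sets \<nu> = sets borel"
    using distr_X[OF one] by (metis sets_distr)
  have "prob_space \<nu>"
    using prob_space_distr[OF X_measurable[OF one]] distr_X[OF one] by simp
  then interpret pair_sigma_finite \<nu> \<nu>
    by (simp add: pair_sigma_finite_def prob_space_imp_sigma_finite)
  have "distr (\<nu> \<Otimes>\<^sub>M \<nu>) (borel \<Otimes>\<^sub>M borel) (\<lambda>(x, y). (y, x)) = distr (\<nu> \<Otimes>\<^sub>M \<nu>) (\<nu> \<Otimes>\<^sub>M \<nu>) (\<lambda>(x, y). (y, x))"
    by (rule distr_cong) (simp_all add: sets_pair_measure_cong[OF \<open>sets \<nu> = sets borel\<close> \<open>sets \<nu> = sets borel\<close>])
  then show ?thesis by (simp flip: distr_pair_swap)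
qed

lemma sample_cov_split:
  assumes "a \<in> {1..n}" "b \<in> {1..n}" "a \<noteq> b"
  shows "sample_cov n X \<omega> = (1 / real n) *\<^sub>R (outer (X a \<omega>) + outer (X b \<omega>)
           + (\<Sum>j\<in>{1..n} - {a, b}. outer (restrict (\<lambda>j. X j \<omega>) ({1..n} - {a, b}) j)))"
proof -
  have "(\<Sum>j\<in>{1..n}. outer (X j \<omega>)) = outer (X a \<omega>) + (\<Sum>j\<in>{1..n} - {a}. outer (X j \<omega>))"
    using assms by (simp add: sum.remove)
  also have "(\<Sum>j\<in>{1..n} - {a}. outer (X j \<omega>)) = outer (X b \<omega>) + (\<Sum>j\<in>{1..n} - {a, b}. outer (X j \<omega>))"
    using assms by (simp add: sum.remove[of _ b] Diff_insert2[symmetric])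
  finally show ?thesis
    unfolding sample_cov_def by (simp add: add.assoc)
qed

definition partial_moment :: "(real^'p^'p) set \<Rightarrow> ('a \<Rightarrow> real) \<Rightarrow> ennreal" where
  "partial_moment B f = (\<integral>\<^sup>+\<omega>. ennreal (f \<omega>) * indicator B (sample_cov n X \<omega>) \<partial>M)"

context
  fixes B :: "(real^'p^'p) set"
  assumes B[measurable]: "B \<in> sets borel"
begin

lemma partial_moment_add:
  assumes [measurable]: "f \<in> borel_measurable M" "g \<in> borel_measurable M"
    and "\<And>\<omega>. 0 \<le> f \<omega>" "\<And>\<omega>. 0 \<le> g \<omega>"
  shows "partial_moment B (\<lambda>\<omega>. f \<omega> + g \<omega>) = partial_moment B f + partial_moment B g"
proof -
  have "partial_moment B (\<lambda>\<omega>. f \<omega> + g \<omega>)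
      = (\<integral>\<^sup>+\<omega>. ennreal (f \<omega>) * indicator B (sample_cov n X \<omega>)
                + ennreal (g \<omega>) * indicator B (sample_cov n X \<omega>) \<partial>M)"
    unfolding partial_moment_def using assms(3,4) by (intro nn_integral_cong) (simp add: distrib_right)
  also have "\<dots> = partial_moment B f + partial_moment B g"
    unfolding partial_moment_def by (rule nn_integral_add; measurable)
  finally show ?thesis .
qed

lemma partial_moment_cmult:
  assumes [measurable]: "f \<in> borel_measurable M" and "0 \<le> c"
  shows "partial_moment B (\<lambda>\<omega>. c * f \<omega>) = ennreal c * partial_moment B f"
proof -
  have "partial_moment B (\<lambda>\<omega>. c * f \<omega>)
      = (\<integral>\<^sup>+\<omega>. ennreal c * (ennreal (f \<omega>) * indicator B (sample_cov n X \<omega>)) \<partial>M)"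
    unfolding partial_moment_def using \<open>0 \<le> c\<close> by (simp add: ennreal_mult' mult.assoc)
  also have "\<dots> = ennreal c * partial_moment B f"
    unfolding partial_moment_def by (rule nn_integral_cmult) measurable
  finally show ?thesis .
qed

lemma partial_moment_sum:
  assumes "finite I" and [measurable]: "\<And>j. j \<in> I \<Longrightarrow> f j \<in> borel_measurable M"
    and nonneg: "\<And>j \<omega>. j \<in> I \<Longrightarrow> 0 \<le> f j \<omega>"
  shows "partial_moment B (\<lambda>\<omega>. \<Sum>j\<in>I. f j \<omega>) = (\<Sum>j\<in>I. partial_moment B (f j))"
  using assms(1,2) nonneg
proof (induction I rule: finite_induct)
  case (insert j I)
  then have "partial_moment B (\<lambda>\<omega>. \<Sum>k\<in>insert j I. f k \<omega>)
      = partial_moment B (f j) + partial_moment B (\<lambda>\<omega>. \<Sum>k\<in>I. f k \<omega>)"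
    by (simp add: partial_moment_add sum_nonneg)
  with insert show ?case by simp
qed (simp add: partial_moment_def)

text \<open>Swapping or rotating two distinct samples does not change such moments, since it preserves the
  sample covariance.\<close>

lemma pair_invariance:
  fixes F :: "(real^'p) \<times> (real^'p) \<Rightarrow> ennreal"
  assumes ab: "a \<in> {1..n}" "b \<in> {1..n}" "a \<noteq> b"
    and T[measurable]: "T \<in> measurable (borel \<Otimes>\<^sub>M borel) (borel \<Otimes>\<^sub>M borel)"
    and T_preserves: "distr (\<nu> \<Otimes>\<^sub>M \<nu>) (borel \<Otimes>\<^sub>M borel) T = \<nu> \<Otimes>\<^sub>M \<nu>"
    and T_outer: "\<And>p. outer (fst (T p)) + outer (snd (T p)) = outer (fst p) + outer (snd p)"
    and F[measurable]: "F \<in> borel_measurable (borel \<Otimes>\<^sub>M borel)"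
  shows "(\<integral>\<^sup>+\<omega>. F (X a \<omega>, X b \<omega>) * indicator B (sample_cov n X \<omega>) \<partial>M)
       = (\<integral>\<^sup>+\<omega>. F (T (X a \<omega>, X b \<omega>)) * indicator B (sample_cov n X \<omega>) \<partial>M)"
proof -
  let ?K = "{1..n} - {a, b}"
  define G where "G = (\<lambda>z :: ((real^'p) \<times> (real^'p)) \<times> (nat \<Rightarrow> real^'p).
    F (fst z) * indicator B ((1 / real n) *\<^sub>R (outer (fst (fst z)) + outer (snd (fst z))
                                                + (\<Sum>j\<in>?K. outer (snd z j)))))"
  have "G \<in> borel_measurable ((borel \<Otimes>\<^sub>M borel) \<Otimes>\<^sub>M PiM ?K (\<lambda>_. borel))"
    unfolding G_def by measurable
  from indep_pair_transform[OF indep ab distr_X[OF ab(1)] distr_X[OF ab(2)] T T_preserves this]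
  show ?thesis
    unfolding G_def by (simp add: sample_cov_split[OF ab] T_outer)
qed

lemma fourth_moment_exchangeable:
  assumes "a \<in> {1..n}" "b \<in> {1..n}"
  shows "partial_moment B (\<lambda>\<omega>. norm (X a \<omega>) ^ 4) = partial_moment B (\<lambda>\<omega>. norm (X b \<omega>) ^ 4)"
proof (cases "a = b")
  case False
  have swap: "(\<lambda>(x, y). (y, x)) \<in> measurable (borel \<Otimes>\<^sub>M borel) (borel \<Otimes>\<^sub>M (borel :: (real^'p) measure))"
    by measurable
  have norm_fst: "(\<lambda>p. ennreal (norm (fst p) ^ 4)) \<in> borel_measurable (borel \<Otimes>\<^sub>M (borel :: (real^'p) measure))"
    by measurable
  have swap_outer: "outer (fst ((\<lambda>(x, y). (y, x)) p)) + outer (snd ((\<lambda>(x, y). (y, x)) p))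
                  = outer (fst p) + outer (snd p)" for p :: "(real^'p) \<times> (real^'p)"
    by (simp add: case_prod_beta add.commute)
  show ?thesis
    unfolding partial_moment_def
    using pair_invariance[OF assms False swap swap_preserves swap_outer norm_fst] by simp
qed simp

lemma diagonal_moment:
  assumes "a \<in> {1..n}"
  shows "partial_moment B (\<lambda>\<omega>. pair_kernel (X a \<omega>) (X a \<omega>)) = 3 * partial_moment B (\<lambda>\<omega>. norm (X a \<omega>) ^ 4)"
  using partial_moment_cmult[of "\<lambda>\<omega>. norm (X a \<omega>) ^ 4" 3] X_measurable[OF assms]
  by (simp add: pair_kernel_diag)

text \<open>For distinct indices the restricted pair kernel moment equals the restricted fourth moment;
  this is where the rotation is used.\<close>

lemma off_diagonal_moment:
  assumes ab: "a \<in> {1..n}" "b \<in> {1..n}" "a \<noteq> b" and i: "i \<in> {1..n}"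
    and finite: "partial_moment B (\<lambda>\<omega>. norm (X i \<omega>) ^ 4) \<noteq> \<infinity>"
  shows "partial_moment B (\<lambda>\<omega>. pair_kernel (X a \<omega>) (X b \<omega>)) = partial_moment B (\<lambda>\<omega>. norm (X i \<omega>) ^ 4)"
proof -
  note [measurable] = X_measurable[OF ab(1)] X_measurable[OF ab(2)]
  define J where "J = partial_moment B (\<lambda>\<omega>. norm (X i \<omega>) ^ 4)"
  define K where "K = partial_moment B (\<lambda>\<omega>. pair_kernel (X a \<omega>) (X b \<omega>))"
  define F where "F = (\<lambda>p :: (real^'p) \<times> (real^'p). norm (fst p) ^ 4 + norm (snd p) ^ 4)"
  have J_a: "partial_moment B (\<lambda>\<omega>. norm (X a \<omega>) ^ 4) = J"
    and J_b: "partial_moment B (\<lambda>\<omega>. norm (X b \<omega>) ^ 4) = J"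
    unfolding J_def using fourth_moment_exchangeable ab i by blast+
  have "partial_moment B (\<lambda>\<omega>. F (X a \<omega>, X b \<omega>)) = J + J"
    unfolding F_def by (simp add: partial_moment_add J_a J_b)
  moreover have "partial_moment B (\<lambda>\<omega>. F (rot (X a \<omega>, X b \<omega>))) = K + J"
  proof -
    have half_a: "partial_moment B (\<lambda>\<omega>. norm (X a \<omega>) ^ 4 / 2) = ennreal (1/2) * J"
      using partial_moment_cmult[of "\<lambda>\<omega>. norm (X a \<omega>) ^ 4" "1/2"] J_a by simp
    have half_b: "partial_moment B (\<lambda>\<omega>. norm (X b \<omega>) ^ 4 / 2) = ennreal (1/2) * J"
      using partial_moment_cmult[of "\<lambda>\<omega>. norm (X b \<omega>) ^ 4" "1/2"] J_b by simp
    have "partial_moment B (\<lambda>\<omega>. F (rot (X a \<omega>, X b \<omega>)))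
        = partial_moment B (\<lambda>\<omega>. pair_kernel (X a \<omega>) (X b \<omega>)
                                + (norm (X a \<omega>) ^ 4 / 2 + norm (X b \<omega>) ^ 4 / 2))"
      unfolding F_def rot_norm_pow_4 by (simp add: add_divide_distrib)
    also have "\<dots> = K + (ennreal (1/2) * J + ennreal (1/2) * J)"
      by (simp add: K_def partial_moment_add pair_kernel_nonneg half_a half_b)
    also have "ennreal (1/2) * J + ennreal (1/2) * J = (ennreal (1/2) + ennreal (1/2)) * J"
      by (simp only: distrib_right)
    also have "ennreal (1/2) + ennreal (1/2) = 1"
      by (subst ennreal_plus[symmetric]) simp_all
    finally show ?thesis by simp
  qed
  moreover have "partial_moment B (\<lambda>\<omega>. F (X a \<omega>, X b \<omega>)) = partial_moment B (\<lambda>\<omega>. F (rot (X a \<omega>, X b \<omega>)))"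
    unfolding partial_moment_def
    by (rule pair_invariance[OF ab rot_measurable rot_preserves]) (simp_all add: rot_outer F_def)
  ultimately have "J + J = J + K" by (metis add.commute)
  with finite[folded J_def] have "K = J"
    by (simp add: ennreal_add_left_cancel top_unique)
  then show ?thesis unfolding K_def J_def .
qed

lemma statistic_moment:
  "ennreal (real n * (real n + 2)) * partial_moment B (\<lambda>\<omega>. fourth_moment_statistic n (sample_cov n X \<omega>))
   = (\<Sum>a\<in>{1..n}. \<Sum>b\<in>{1..n}. partial_moment B (\<lambda>\<omega>. pair_kernel (X a \<omega>) (X b \<omega>)))"
proof -
  have kernel_measurable: "(\<lambda>\<omega>. pair_kernel (X a \<omega>) (X b \<omega>)) \<in> borel_measurable M"
    if "a \<in> {1..n}" "b \<in> {1..n}" for a b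
    using X_measurable[OF that(1)] X_measurable[OF that(2)] by measurable
  have "ennreal (real n * (real n + 2)) * partial_moment B (\<lambda>\<omega>. fourth_moment_statistic n (sample_cov n X \<omega>))
      = partial_moment B (\<lambda>\<omega>. real n * (real n + 2) * fourth_moment_statistic n (sample_cov n X \<omega>))"
    by (simp add: partial_moment_cmult)
  also have "\<dots> = partial_moment B (\<lambda>\<omega>. \<Sum>a\<in>{1..n}. \<Sum>b\<in>{1..n}. pair_kernel (X a \<omega>) (X b \<omega>))"
    unfolding sample_cov_def fourth_moment_statistic_sum[OF n_pos] ..
  also have "\<dots> = (\<Sum>a\<in>{1..n}. partial_moment B (\<lambda>\<omega>. \<Sum>b\<in>{1..n}. pair_kernel (X a \<omega>) (X b \<omega>)))"
    by (rule partial_moment_sum) (auto intro!: borel_measurable_sum kernel_measurable sum_nonneg pair_kernel_nonneg)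
  also have "\<dots> = (\<Sum>a\<in>{1..n}. \<Sum>b\<in>{1..n}. partial_moment B (\<lambda>\<omega>. pair_kernel (X a \<omega>) (X b \<omega>)))"
    by (intro sum.cong refl partial_moment_sum) (auto intro: kernel_measurable pair_kernel_nonneg)
  finally show ?thesis .
qed

theorem fourth_moment_given_sample_cov:
  assumes i: "i \<in> {1..n}"
  shows "partial_moment B (\<lambda>\<omega>. norm (X i \<omega>) ^ 4)
       = partial_moment B (\<lambda>\<omega>. fourth_moment_statistic n (sample_cov n X \<omega>))"
proof -
  define J where "J = partial_moment B (\<lambda>\<omega>. norm (X i \<omega>) ^ 4)"
  define H where "H = partial_moment B (\<lambda>\<omega>. fourth_moment_statistic n (sample_cov n X \<omega>))"
  define K where "K a b = partial_moment B (\<lambda>\<omega>. pair_kernel (X a \<omega>) (X b \<omega>))" for a b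
  define c where "c = real n * (real n + 2)"
  have c_pos: "c > 0" using n_pos by (simp add: c_def)
  have cH: "ennreal c * H = (\<Sum>a\<in>{1..n}. \<Sum>b\<in>{1..n}. K a b)"
    unfolding c_def H_def K_def by (rule statistic_moment)
  have diagonal: "K a a = 3 * J" if "a \<in> {1..n}" for a
    unfolding K_def J_def diagonal_moment[OF that] fourth_moment_exchangeable[OF that i] ..
  show ?thesis
  proof (cases "J = \<infinity>")
    case True
    \<comment> \<open>An infinite fourth moment makes the diagonal term, hence the whole sum, infinite.\<close>
    have "K i i \<le> (\<Sum>b\<in>{1..n}. K i b)" by (rule member_le_sum) (use i in auto)
    also have "\<dots> \<le> (\<Sum>a\<in>{1..n}. \<Sum>b\<in>{1..n}. K a b)" by (rule member_le_sum) (use i in auto)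
    finally have "ennreal c * H = \<infinity>"
      using True diagonal[OF i] by (simp add: cH top_unique ennreal_mult_top)
    then have "H = \<infinity>" by (simp add: ennreal_mult_eq_top_iff)
    with True show ?thesis by (simp add: J_def H_def)
  next
    case False
    have row: "K a b = J + (if b = a then 2 * J else 0)" if "a \<in> {1..n}" "b \<in> {1..n}" for a b
    proof (cases "b = a")
      case True
      have "J + 2 * J = (1 + 2) * J" by (simp only: distrib_right mult_1)
      then show ?thesis using diagonal[OF that(1)] True by simp
    next
      case False
      then show ?thesis
        using off_diagonal_moment[OF that False[symmetric] i] \<open>J \<noteq> \<infinity>\<close> by (simp add: K_def J_def)
    qed
    \<comment> \<open>Each row of the n by n array of pair moments sums to (n + 2) J.\<close>
    have "(\<Sum>a\<in>{1..n}. \<Sum>b\<in>{1..n}. K a b) = (\<Sum>a\<in>{1..n}. of_nat n * J + 2 * J)"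
      by (intro sum.cong refl) (simp add: row sum.distrib)
    also have "\<dots> = ennreal c * J"
    proof -
      have "ennreal c = of_nat n * (of_nat n + 2)"
        by (simp add: c_def ennreal_mult ennreal_of_nat_eq_real_of_nat[symmetric])
      then show ?thesis by (simp add: algebra_simps)
    qed
    finally have "ennreal c * H = ennreal c * J" by (simp add: cH)
    then show ?thesis
      using c_pos by (simp add: ennreal_mult_cancel_left J_def H_def)
  qed
qed

end

end

lemma (in finite_measure) real_cond_exp_vimage_eq:
  assumes S[measurable]: "S \<in> measurable M N"
    and f[measurable]: "f \<in> borel_measurable M" and f_nonneg: "\<And>x. 0 \<le> f x"
    and g[measurable]: "g \<in> borel_measurable N" and g_nonneg: "\<And>x. 0 \<le> g (S x)"
    and moments: "\<And>A. A \<in> sets N \<Longrightarrow>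
      (\<integral>\<^sup>+x. ennreal (f x) * indicator A (S x) \<partial>M) = (\<integral>\<^sup>+x. ennreal (g (S x)) * indicator A (S x) \<partial>M)"
  shows "AE x in M. real_cond_exp M (vimage_algebra (space M) S N) f x = g (S x)"
proof -
  define F where "F = vimage_algebra (space M) S N"
  have sets_F: "sets F = {S -` A \<inter> space M | A. A \<in> sets N}"
    unfolding F_def by (rule sets_vimage_algebra2) (use S in \<open>auto intro: measurable_space\<close>)
  have "subalgebra M F"
    unfolding subalgebra_def
  proof
    show "space F = space M" by (simp add: F_def)
    show "sets F \<subseteq> sets M" unfolding sets_F using S by (auto intro: measurable_sets)
  qed
  then interpret finite_measure_subalgebra M F by unfold_locales
  have gS: "(\<lambda>x. g (S x)) \<in> borel_measurable F"
    unfolding F_def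
    by (rule measurable_compose[OF measurable_vimage_algebra1 g]) (use S in \<open>auto intro: measurable_space\<close>)
  have pos: "AE x in M. ennreal (g (S x)) = nn_cond_exp M F (\<lambda>x. ennreal (f x)) x"
  proof (rule nn_cond_exp_charact)
    fix E assume "E \<in> sets F"
    then obtain A where A: "A \<in> sets N" "E = S -` A \<inter> space M" by (auto simp: sets_F)
    have "(\<integral>\<^sup>+x\<in>E. ennreal (f x) \<partial>M) = (\<integral>\<^sup>+x. ennreal (f x) * indicator A (S x) \<partial>M)"
      by (rule nn_integral_cong) (auto simp: A split: split_indicator)
    also have "\<dots> = (\<integral>\<^sup>+x. ennreal (g (S x)) * indicator A (S x) \<partial>M)"
      by (rule moments[OF A(1)])
    also have "\<dots> = (\<integral>\<^sup>+x\<in>E. ennreal (g (S x)) \<partial>M)"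
      by (rule nn_integral_cong) (auto simp: A split: split_indicator)
    finally show "(\<integral>\<^sup>+x\<in>E. ennreal (f x) \<partial>M) = (\<integral>\<^sup>+x\<in>E. ennreal (g (S x)) \<partial>M)" .
  next
    show "(\<lambda>x. ennreal (f x)) \<in> borel_measurable M" by measurable
  next
    show "(\<lambda>x. ennreal (g (S x))) \<in> borel_measurable F" using gS by measurable
  qed
  have neg: "AE x in M. 0 = nn_cond_exp M F (\<lambda>x. ennreal (- f x)) x"
    by (rule nn_cond_exp_charact) (simp_all add: f_nonneg ennreal_neg)
  show ?thesis
    using pos neg
  proof eventually_elim
    case (elim x)
    show ?case
      unfolding real_cond_exp_def F_def[symmetric]
      using elim(1)[symmetric] elim(2)[symmetric] g_nonneg[of x] by simp
  qed
qed

lemma normal_sample_rotation_invariant: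
  fixes M :: "'a measure" and Sig :: "real^'p^'p" and X :: "nat \<Rightarrow> 'a \<Rightarrow> real^'p"
  assumes "prob_space M" and "n \<ge> 1"
    and "prob_space.indep_vars M (\<lambda>_. borel) X {1..n}"
    and "\<And>j. j \<in> {1..n} \<Longrightarrow> distributed M lborel (X j) (\<lambda>x. ennreal (mvn_density Sig x))"
  shows "rotation_invariant_sample M X n (density lborel (\<lambda>x. ennreal (mvn_density Sig x)))"
proof -
  interpret prob_space M by fact
  define \<phi> where "\<phi> = (\<lambda>x. ennreal (mvn_density Sig x))"
  define \<nu> where "\<nu> = density lborel \<phi>"
  have one: "1 \<in> {1..n}" using \<open>n \<ge> 1\<close> by simp
  have distr_X: "distr M borel (X j) = \<nu>" if "j \<in> {1..n}" for j
  proof -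
    have "distr M borel (X j) = distr M lborel (X j)" by (rule distr_cong) simp_all
    also have "\<dots> = \<nu>" using assms(4)[OF that] by (simp add: distributed_def \<nu>_def \<phi>_def)
    finally show ?thesis .
  qed
  have \<phi>_measurable: "\<phi> \<in> borel_measurable borel"
    using assms(4)[OF one] by (simp add: distributed_def \<phi>_def measurable_cong_sets[OF sets_lborel refl])
  have "prob_space \<nu>"
    using assms(4)[OF one] distr_X[OF one] prob_space_distr[of "X 1" borel]
    by (simp add: distributed_def measurable_cong_sets[OF refl sets_lborel])
  then have "distr (\<nu> \<Otimes>\<^sub>M \<nu>) (borel \<Otimes>\<^sub>M borel) rot = \<nu> \<Otimes>\<^sub>M \<nu>"
    unfolding \<nu>_def using \<phi>_measurable
    by (intro product_density_rot_invariant) (simp_all add: \<phi>_def mvn_density_rot prob_space_imp_sigma_finite)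
  then show ?thesis
    unfolding \<nu>_def \<phi>_def using assms(2,3) distr_X by unfold_locales (auto simp: \<nu>_def \<phi>_def)
qed

text \<open>The argument only uses that each X_j has the
  stated density.\<close>

theorem lemma3:
  fixes M :: "'a measure" and Sig :: "real^'p^'p"
    and X :: "nat \<Rightarrow> 'a \<Rightarrow> real^'p" and n :: nat and i :: nat
  assumes "prob_space M"
    and "n \<ge> 1"
    and "sym_pos_def_matrix Sig"
    and "prob_space.indep_vars M (\<lambda>_. borel) X {1..n}"
    and "\<And>j. j \<in> {1..n} \<Longrightarrow>
           distributed M lborel (X j) (\<lambda>x. ennreal (mvn_density Sig x))"
    and "i \<in> {1..n}"
  shows "AE \<omega> in M.
           real_cond_exp M (vimage_algebra (space M) (sample_cov n X) borel)
             (\<lambda>\<omega>. norm (X i \<omega>) ^ 4) \<omega>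
         = real n / (real n + 2) *
             (2 * trace (sample_cov n X \<omega> ** sample_cov n X \<omega>)
              + (trace (sample_cov n X \<omega>))\<^sup>2)"
proof -
  interpret rotation_invariant_sample M X n "density lborel (\<lambda>x. ennreal (mvn_density Sig x))"
    using assms(1,2,4,5) by (rule normal_sample_rotation_invariant)
  have "AE \<omega> in M. real_cond_exp M (vimage_algebra (space M) (sample_cov n X) borel) (\<lambda>\<omega>. norm (X i \<omega>) ^ 4) \<omega>
      = fourth_moment_statistic n (sample_cov n X \<omega>)"
  proof (rule real_cond_exp_vimage_eq)
    show "(\<lambda>\<omega>. norm (X i \<omega>) ^ 4) \<in> borel_measurable M"
      using X_measurable[OF assms(6)] by measurable
    show "0 \<le> fourth_moment_statistic n (sample_cov n X \<omega>)" for \<omega>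
      unfolding sample_cov_def by (rule fourth_moment_statistic_nonneg[OF n_pos])
    show "(\<integral>\<^sup>+\<omega>. ennreal (norm (X i \<omega>) ^ 4) * indicator A (sample_cov n X \<omega>) \<partial>M)
        = (\<integral>\<^sup>+\<omega>. ennreal (fourth_moment_statistic n (sample_cov n X \<omega>)) * indicator A (sample_cov n X \<omega>) \<partial>M)"
      if "A \<in> sets borel" for A
      using fourth_moment_given_sample_cov[OF that assms(6)] by (simp add: partial_moment_def)
  qed simp_all
  then show ?thesis
    by (simp add: fourth_moment_statistic_def)
qed

end
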